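(* Let $v_1\ge v_2>0$, $m\in\mathbb{Z}_{\ge1}$, $\alpha\in(0,1)$ and $0<b\le m$. If a strategy profile $(X,Y)$ with $\mathbf{E}(X)=m+\alpha$ and $\mathbf{E}(Y)=b$ is a Nash equilibrium of the discrete all-pay auction with valuations $v_1,v_2$, then $\frac{m(m+1)}{b}=\frac{v_1}{2}$, $(X,Y)$ is a Nash equilibrium of the General Lotto game $\Gamma(m+\alpha,b)$, and $Y=\left(1-\frac bm\right)\delta_0+\frac bmU_{\mathrm{E}}^m$.
   Context: Discrete all-pay auction: two players, 1 and 2, value a prize at $v_1$ and $v_2$ respectively, where $v_1\ge v_2>0$. A (mixed) strategy is a probability distribution on $\mathbb{Z}_{\ge 0}$ with finite mean, identified with a $\mathbb{Z}_{\ge0}$-valued random variable; the two players' choices are independent. If player 1 uses $X$ and player 2 uses $Y$, the expected payoffs are $P^1(X,Y)=v_1\Pr(X>Y)+\frac{v_1}{2}\Pr(X=Y)-\mathbf{E}(X)$ and $P^2(Y,X)=v_2\Pr(Y>X)+\frac{v_2}{2}\Pr(X=Y)-\mathbf{E}(Y)$. A Nash equilibrium of the all-pay auction is a pair $(X,Y)$ with $P^1(X,Y)\ge P^1(X',Y)$ and $P^2(Y,X)\ge P^2(Y',X)$ for all strategies $X',Y'$. $\delta_j$ denotes the point mass at $j$; $\lambda A+(1-\lambda)B$ denotes the mixture of distributions $A$ and $B$. Discrete General Lotto game: for reals $a,b\ge 0$, in $\Gamma(a,b)$ player 1 chooses a distribution $X$ on $\mathbb{Z}_{\ge0}$ with $\mathbf{E}(X)=a$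 and player 2 chooses a distribution $Y$ on $\mathbb{Z}_{\ge 0}$ with $\mathbf{E}(Y)=b$ (independently); the payoff to player 1 is $H(X,Y)=\Pr(X>Y)-\Pr(X<Y)$ and to player 2 is $H(Y,X)=-H(X,Y)$. A Nash equilibrium of $\Gamma(a,b)$ is a pair $(X,Y)$ from these strategy sets such that neither player can increase her payoff by switching to another strategy in her own strategy set. For $m\ge0$, $U_{\mathrm{E}}^m$ is the uniform distribution on $\{0,2,\dots,2m\}$. *)

theory Defs
  imports "HOL-Probability.Probability"
begin

definition strategy :: "nat pmf \<Rightarrow> bool" where
  "strategy X \<longleftrightarrow> integrable (measure_pmf X) real"

definition mean :: "nat pmf \<Rightarrow> real" where
  "mean X = measure_pmf.expectation X real"

definition prob_gt :: "nat pmf \<Rightarrow> nat pmf \<Rightarrow> real" where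
  "prob_gt A B = measure_pmf.prob (pair_pmf A B) {(x, y). x > y}"

definition prob_eq :: "nat pmf \<Rightarrow> nat pmf \<Rightarrow> real" where
  "prob_eq A B = measure_pmf.prob (pair_pmf A B) {(x, y). x = y}"

definition allpay_payoff :: "real \<Rightarrow> nat pmf \<Rightarrow> nat pmf \<Rightarrow> real" where
  "allpay_payoff v A B = v * prob_gt A B + v / 2 * prob_eq A B - mean A"

definition allpay_NE :: "real \<Rightarrow> real \<Rightarrow> nat pmf \<Rightarrow> nat pmf \<Rightarrow> bool" where
  "allpay_NE v1 v2 X Y \<longleftrightarrow> strategy X \<and> strategy Y \<and>
     (\<forall>X'. strategy X' \<longrightarrow> allpay_payoff v1 X' Y \<le> allpay_payoff v1 X Y) \<and>
     (\<forall>Y'. strategy Y' \<longrightarrow> allpay_payoff v2 Y' X \<le> allpay_payoff v2 Y X)"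

definition lotto_H :: "nat pmf \<Rightarrow> nat pmf \<Rightarrow> real" where
  "lotto_H A B = prob_gt A B - prob_gt B A"

definition lotto_NE :: "real \<Rightarrow> real \<Rightarrow> nat pmf \<Rightarrow> nat pmf \<Rightarrow> bool" where
  "lotto_NE a b X Y \<longleftrightarrow>
     strategy X \<and> mean X = a \<and> strategy Y \<and> mean Y = b \<and>
     (\<forall>X'. strategy X' \<and> mean X' = a \<longrightarrow> lotto_H X' Y \<le> lotto_H X Y) \<and>
     (\<forall>Y'. strategy Y' \<and> mean Y' = b \<longrightarrow> lotto_H Y' X \<le> lotto_H Y X)"

definition U_E :: "nat \<Rightarrow> nat pmf" where
  "U_E m = pmf_of_set ((\<lambda>k. 2 * k) ` {0..m})"

definition mix :: "real \<Rightarrow> nat pmf \<Rightarrow> nat pmf \<Rightarrow> nat pmf" where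
  "mix l A B = bind_pmf (bernoulli_pmf l) (\<lambda>c. if c then A else B)"

end

theory Submission
  imports Defs
begin

text \<open>Both games depend on the opponent B only through the score function
  score B k = 2 Pr(B < k) + Pr(B = k): the all-pay payoff of A is (v/2) E score B (A) - E A and the
  Lotto payoff is E score B (A) - 1. With the means fixed, best responses in the all-pay auction are
  therefore best responses in the Lotto game. Player 2 deviating to the candidate
  (1 - b/m) \<delta>_0 + (b/m) U_E^m bounds E score Y (X) from above, while player 1 deviating to the pure
  odd bids 1, 3, ..., 2n - 1 bounds it from below; mixing the bounds for n = m and n = m + 1 with
  weights (1 - \<alpha>)(m + 1) and \<alpha> m makes them coincide. Hence all the odd bids up to 2m + 1 are best
  responses for player 1, and Y \<le> 2m almost surely. These indifference conditions, together with
  the fact that even bids are no better, pin down the distribution function of Y at every point.\<close>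

lemma integrable_measure_pmf_bounded:
  fixes f :: "'a \<Rightarrow> real"
  assumes "\<And>x. \<bar>f x\<bar> \<le> C"
  shows "integrable (measure_pmf A) f"
  by (rule measure_pmf.integrable_const_bound[where B=C]) (use assms in auto)

lemma prob_pair_pmf_eq_expectation:
  "measure_pmf.prob (pair_pmf A B) S = measure_pmf.expectation A (\<lambda>x. measure_pmf.prob B {y. (x, y) \<in> S})"
proof -
  have "ennreal (measure_pmf.prob (pair_pmf A B) S) = (\<integral>\<^sup>+z. indicator S z \<partial>pair_pmf A B)"
    by (simp add: measure_pmf.emeasure_eq_measure)
  also have "\<dots> = (\<integral>\<^sup>+a. \<integral>\<^sup>+b. indicator {y. (a, y) \<in> S} b \<partial>B \<partial>A)"
    unfolding nn_integral_pair_pmf'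
    by (intro nn_integral_cong) (auto split: split_indicator)
  also have "\<dots> = (\<integral>\<^sup>+a. ennreal (measure_pmf.prob B {y. (a, y) \<in> S}) \<partial>A)"
    by (simp add: measure_pmf.emeasure_eq_measure)
  also have "\<dots> = ennreal (measure_pmf.expectation A (\<lambda>x. measure_pmf.prob B {y. (x, y) \<in> S}))"
    by (rule nn_integral_eq_integral) (auto intro!: integrable_measure_pmf_bounded[where C=1])
  finally show ?thesis
    by (subst (asm) ennreal_inj) (auto intro!: integral_nonneg_AE)
qed

subsection \<open>The score function\<close>

definition cdf_nat :: "nat pmf \<Rightarrow> nat \<Rightarrow> real" where
  "cdf_nat B k = measure_pmf.prob B {..k}"

definition score :: "nat pmf \<Rightarrow> nat \<Rightarrow> real" where
  "score B k = measure_pmf.prob B {..<k} + cdf_nat B k"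

definition expected_score :: "nat pmf \<Rightarrow> nat pmf \<Rightarrow> real" where
  "expected_score A B = measure_pmf.expectation A (score B)"

lemma cdf_nat_eq_sum: "cdf_nat B k = (\<Sum>i\<le>k. pmf B i)"
  unfolding cdf_nat_def by (simp add: measure_measure_pmf_finite)

lemma pmf_0_eq_cdf_nat: "pmf B 0 = cdf_nat B 0"
  by (simp add: cdf_nat_eq_sum)

lemma pmf_Suc_eq_cdf_nat: "pmf B (Suc k) = cdf_nat B (Suc k) - cdf_nat B k"
  by (simp add: cdf_nat_eq_sum)

lemma prob_atMost_eq: "measure_pmf.prob B {..k::nat} = measure_pmf.prob B {..<k} + pmf B k"
  by (simp add: measure_measure_pmf_finite lessThan_Suc_atMost[symmetric])

lemma prob_greaterThan_eq: "measure_pmf.prob B {k::nat<..} = 1 - cdf_nat B k"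
proof -
  have "{k<..} = space (measure_pmf B) - {..k}" by auto
  then show ?thesis
    unfolding cdf_nat_def using measure_pmf.prob_compl[of "{..k}" B] by simp
qed

lemma score_0: "score B 0 = cdf_nat B 0"
  unfolding score_def by simp

lemma score_Suc: "score B (Suc k) = cdf_nat B k + cdf_nat B (Suc k)"
  unfolding score_def cdf_nat_def by (simp add: lessThan_Suc_atMost)

lemma score_nonneg: "0 \<le> score B k"
  unfolding score_def cdf_nat_def by simp

lemma prob_gt_eq_expectation: "prob_gt A B = measure_pmf.expectation A (\<lambda>x. measure_pmf.prob B {..<x})"
  unfolding prob_gt_def prob_pair_pmf_eq_expectation
  by (rule Bochner_Integration.integral_cong) (auto intro!: arg_cong[where f="measure_pmf.prob B"])

lemma prob_eq_eq_expectation: "prob_eq A B = measure_pmf.expectation A (pmf B)"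
  unfolding prob_eq_def prob_pair_pmf_eq_expectation
  by (rule Bochner_Integration.integral_cong)
    (auto simp: measure_pmf_single[symmetric] intro!: arg_cong[where f="measure_pmf.prob B"])

lemma prob_gt_swap_eq_expectation: "prob_gt B A = measure_pmf.expectation A (\<lambda>x. 1 - cdf_nat B x)"
proof -
  have "prob_gt B A = measure_pmf.prob (pair_pmf A B) {(x, y). x < y}"
    unfolding prob_gt_def
    by (subst pair_commute_pmf) (auto intro!: arg_cong[where f="measure_pmf.prob (pair_pmf A B)"])
  also have "\<dots> = measure_pmf.expectation A (\<lambda>x. measure_pmf.prob B {x<..})"
    unfolding prob_pair_pmf_eq_expectation
    by (rule Bochner_Integration.integral_cong) (auto intro!: arg_cong[where f="measure_pmf.prob B"])
  finally show ?thesis by (simp only: prob_greaterThan_eq)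
qed

lemma allpay_payoff_eq_expected_score: "allpay_payoff v A B = v / 2 * expected_score A B - mean A"
proof -
  have "expected_score A B = measure_pmf.expectation A (\<lambda>x. 2 * measure_pmf.prob B {..<x} + pmf B x)"
    unfolding expected_score_def score_def cdf_nat_def
    by (rule Bochner_Integration.integral_cong) (auto simp: prob_atMost_eq)
  also have "\<dots> = 2 * prob_gt A B + prob_eq A B"
    unfolding prob_gt_eq_expectation prob_eq_eq_expectation
    by (simp add: integrable_measure_pmf_bounded[where C=1] pmf_le_1)
  finally show ?thesis
    unfolding allpay_payoff_def by (simp add: algebra_simps)
qed

lemma lotto_H_eq_expected_score: "lotto_H A B = expected_score A B - 1"
  unfolding lotto_H_def prob_gt_eq_expectation[of A B] prob_gt_swap_eq_expectation[of B A]
    expected_score_def score_def cdf_nat_def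
  by (simp add: integrable_measure_pmf_bounded[where C=1])

lemma expected_score_swap: "expected_score A B + expected_score B A = 2"
  using lotto_H_eq_expected_score[of A B] lotto_H_eq_expected_score[of B A]
  unfolding lotto_H_def by simp

lemma strategy_finite: "finite (set_pmf A) \<Longrightarrow> strategy A"
  unfolding strategy_def by (rule integrable_measure_pmf_finite)

lemma strategy_return_pmf: "strategy (return_pmf k)"
  by (simp add: strategy_finite)

lemma mean_return_pmf: "mean (return_pmf k) = real k"
  by (simp add: mean_def)

lemma expected_score_return_pmf: "expected_score (return_pmf k) B = score B k"
  by (simp add: expected_score_def)

lemma allpay_NE_imp_lotto_NE:
  assumes "allpay_NE v1 v2 X Y" "0 < v1" "0 < v2"
  shows "lotto_NE (mean X) (mean Y) X Y"
  using assms unfolding allpay_NE_def lotto_NE_def lotto_H_eq_expected_score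
  by (auto simp: allpay_payoff_eq_expected_score)

subsection \<open>Truncated expectations\<close>

lemma sum_cdf_nat_eq_expectation:
  "(\<Sum>l<L. cdf_nat B l) = measure_pmf.expectation B (\<lambda>y. real (L - y))"
proof -
  have indicator_sum: "(\<Sum>l<L. indicator {..l} y :: real) = real (L - y)" for y
    by (induction L) (auto simp: indicator_def Suc_diff_le)
  have "(\<Sum>l<L. cdf_nat B l) = measure_pmf.expectation B (\<lambda>y. \<Sum>l<L. indicator {..l} y :: real)"
    unfolding cdf_nat_def
    by (subst Bochner_Integration.integral_sum)
      (auto intro!: integrable_measure_pmf_bounded[where C=1])
  then show ?thesis by (simp only: indicator_sum)
qed

lemma sum_score_odd: "(\<Sum>i<n. score B (2 * i + 1)) = (\<Sum>l<2 * n. cdf_nat B l)"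
  by (induction n) (auto simp: score_Suc)

lemma sum_score_even: "(\<Sum>i\<le>n. score B (2 * i)) = (\<Sum>l<2 * n + 1. cdf_nat B l)"
proof (induction n)
  case (Suc n)
  then show ?case using score_Suc[of B "2 * n + 1"] by simp
qed (simp add: score_0)

lemma expectation_diff_ge:
  assumes "strategy B"
  shows "real L - mean B \<le> measure_pmf.expectation B (\<lambda>y. real (L - y))"
proof -
  have "integrable (measure_pmf B) real"
    using assms unfolding strategy_def .
  then have "real L - mean B = measure_pmf.expectation B (\<lambda>y. real L - real y)"
    by (simp add: mean_def)
  also have "\<dots> \<le> measure_pmf.expectation B (\<lambda>y. real (L - y))"
    using \<open>integrable (measure_pmf B) real\<close>
    by (intro integral_mono) (auto intro!: integrable_measure_pmf_bounded[where C="real L"])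
  finally show ?thesis .
qed

lemma set_pmf_le_if_expectation_diff_eq:
  assumes "strategy B" and "measure_pmf.expectation B (\<lambda>y. real (L - y)) = real L - mean B"
    and "y \<in> set_pmf B"
  shows "y \<le> L"
proof -
  have int_real: "integrable (measure_pmf B) real"
    using assms(1) unfolding strategy_def .
  have int_diff: "integrable (measure_pmf B) (\<lambda>y. real (L - y))"
    by (rule integrable_measure_pmf_bounded[where C="real L"]) auto
  have "measure_pmf.expectation B (\<lambda>y. real (L - y) - (real L - real y)) = 0"
    using assms(2) int_real int_diff by (simp add: mean_def)
  then have "AE y in measure_pmf B. real (L - y) - (real L - real y) = 0"
    using int_real int_diff
    by (subst integral_nonneg_eq_0_iff_AE[symmetric]) auto
  then show ?thesis
    using assms(3) by (auto simp: AE_measure_pmf_iff)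
qed

subsection \<open>Mixtures of the point mass at 0 and the uniform distribution on even numbers\<close>

lemma pmf_mix:
  assumes "0 \<le> l" "l \<le> 1"
  shows "pmf (mix l A B) k = l * pmf A k + (1 - l) * pmf B k"
proof -
  have "pmf (mix l A B) k = (\<Sum>c\<in>UNIV. pmf (if c then A else B) k * pmf (bernoulli_pmf l) c)"
    unfolding mix_def pmf_bind by (rule integral_measure_pmf_real) auto
  then show ?thesis
    using assms by (simp add: UNIV_bool)
qed

lemma set_pmf_mix:
  assumes "0 \<le> l" "l \<le> 1"
  shows "set_pmf (mix l A B) \<subseteq> set_pmf A \<union> set_pmf B"
  using pmf_mix[OF assms] by (auto simp: set_pmf_iff)

lemma expectation_mix:
  fixes f :: "nat \<Rightarrow> real"
  assumes "0 \<le> l" "l \<le> 1" "finite (set_pmf A)" "finite (set_pmf B)"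
  shows "measure_pmf.expectation (mix l A B) f
    = l * measure_pmf.expectation A f + (1 - l) * measure_pmf.expectation B f"
proof -
  let ?S = "set_pmf A \<union> set_pmf B"
  have fin: "finite ?S" using assms by auto
  have "measure_pmf.expectation (mix l A B) f = (\<Sum>k\<in>?S. f k * pmf (mix l A B) k)"
    by (rule integral_measure_pmf_real[OF fin]) (use set_pmf_mix[OF assms(1,2)] in auto)
  also have "\<dots> = l * (\<Sum>k\<in>?S. f k * pmf A k) + (1 - l) * (\<Sum>k\<in>?S. f k * pmf B k)"
    by (simp add: pmf_mix[OF assms(1,2)] sum.distrib sum_distrib_left algebra_simps sum_subtractf)
  also have "(\<Sum>k\<in>?S. f k * pmf A k) = measure_pmf.expectation A f"
    by (rule integral_measure_pmf_real[OF fin, symmetric]) auto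
  also have "(\<Sum>k\<in>?S. f k * pmf B k) = measure_pmf.expectation B f"
    by (rule integral_measure_pmf_real[OF fin, symmetric]) auto
  finally show ?thesis .
qed

lemma inj_on_double: "inj_on (\<lambda>k::nat. 2 * k) A"
  by (auto simp: inj_on_def)

lemma set_pmf_U_E: "set_pmf (U_E m) = (\<lambda>k. 2 * k) ` {..m}"
  unfolding U_E_def atLeast0AtMost by (subst set_pmf_of_set) auto

lemma pmf_U_E: "pmf (U_E m) n = (if n \<in> (\<lambda>k. 2 * k) ` {..m} then 1 / (real m + 1) else 0)"
  unfolding U_E_def atLeast0AtMost by (subst pmf_of_set) (auto simp: card_image inj_on_double)

lemma expectation_U_E: "measure_pmf.expectation (U_E m) f = (\<Sum>i\<le>m. f (2 * i)) / (real m + 1)"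
  unfolding U_E_def atLeast0AtMost by (subst integral_pmf_of_set) (auto simp: sum.reindex card_image inj_on_double)

lemma
  assumes "0 \<le> l" "l \<le> 1"
  shows strategy_mix_U_E: "strategy (mix l (return_pmf 0) (U_E m))"
    and expectation_mix_U_E: "measure_pmf.expectation (mix l (return_pmf 0) (U_E m)) f
      = l * f 0 + (1 - l) * (\<Sum>i\<le>m. f (2 * i)) / (real m + 1)"
    and pmf_mix_U_E: "pmf (mix l (return_pmf 0) (U_E m)) n
      = l * of_bool (n = 0) + (1 - l) * of_bool (n \<in> (\<lambda>k. 2 * k) ` {..m}) / (real m + 1)"
proof -
  show "strategy (mix l (return_pmf 0) (U_E m))"
    using set_pmf_mix[OF assms, of "return_pmf 0" "U_E m"]
    by (intro strategy_finite) (auto intro: finite_subset simp: set_pmf_U_E)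
  show "measure_pmf.expectation (mix l (return_pmf 0) (U_E m)) f
      = l * f 0 + (1 - l) * (\<Sum>i\<le>m. f (2 * i)) / (real m + 1)"
    using assms by (simp add: expectation_mix set_pmf_U_E expectation_U_E)
  show "pmf (mix l (return_pmf 0) (U_E m)) n
      = l * of_bool (n = 0) + (1 - l) * of_bool (n \<in> (\<lambda>k. 2 * k) ` {..m}) / (real m + 1)"
    using assms by (simp add: pmf_mix pmf_U_E indicator_def)
qed

lemma mean_mix_U_E:
  assumes "0 \<le> l" "l \<le> 1"
  shows "mean (mix l (return_pmf 0) (U_E m)) = (1 - l) * real m"
proof -
  have "(\<Sum>i\<le>m. real (2 * i)) = real m * (real m + 1)"
    by (induction m) (auto simp: algebra_simps)
  then show ?thesis
    unfolding mean_def expectation_mix_U_E[OF assms] by (simp add: add_pos_nonneg)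
qed

lemma expected_score_mix_U_E_ge:
  assumes "0 \<le> l" "l \<le> 1" "strategy X"
  shows "(1 - l) * (real (2 * m + 1) - mean X) / (real m + 1)
    \<le> expected_score (mix l (return_pmf 0) (U_E m)) X"
proof -
  have "real (2 * m + 1) - mean X \<le> (\<Sum>i\<le>m. score X (2 * i))"
    unfolding sum_score_even sum_cdf_nat_eq_expectation by (rule expectation_diff_ge[OF assms(3)])
  then have "(1 - l) * (real (2 * m + 1) - mean X) \<le> (1 - l) * (\<Sum>i\<le>m. score X (2 * i))"
    using assms(2) by (intro mult_left_mono) auto
  moreover have "0 \<le> l * score X 0"
    using assms(1) score_nonneg by simp
  ultimately show ?thesis
    unfolding expected_score_def expectation_mix_U_E[OF assms(1,2)]
    by (smt (verit) divide_right_mono of_nat_0_le_iff)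
qed

text \<open>Backward induction from the top: if the odd indifference equation holds at 2k + 2 and the
  distribution function is flat on [2k + 2, 2k + 3], then the even inequality at 2k + 2 leaves no
  room for mass at 2k + 1.\<close>

lemma flat_at_odd_points:
  fixes G :: "nat \<Rightarrow> real"
  assumes mono: "\<And>k. G k \<le> G (Suc k)" and "0 < c"
    and odd: "\<And>i. i \<le> m \<Longrightarrow> c * (G (2 * i) + G (2 * i + 1)) = P + real (2 * i + 1)"
    and even: "\<And>i. c * (G (2 * i + 1) + G (2 * i + 2)) \<le> P + real (2 * i + 2)"
    and top: "G (2 * m + 1) = G (2 * m)"
    and "k \<le> m"
  shows "G (2 * k + 1) = G (2 * k)"
  using \<open>k \<le> m\<close>
proof (induction k rule: inc_induct)
  case base
  show ?case by (rule top)
next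
  case (step k)
  have "2 * (c * G (2 * k + 2)) = P + real (2 * k + 3)"
    using odd[of "Suc k"] step by simp
  then have "c * G (2 * k + 1) + c * G (2 * k + 1) \<le> P + real (2 * k + 1)"
    using even[of k] by (simp add: distrib_left)
  moreover have "c * G (2 * k) + c * G (2 * k + 1) = P + real (2 * k + 1)"
    using odd[of k] step by (simp add: distrib_left)
  moreover have "c * G (2 * k) \<le> c * G (2 * k + 1)"
    using mono[of "2 * k"] \<open>0 < c\<close> by simp
  ultimately have "c * G (2 * k + 1) = c * G (2 * k)"
    by linarith
  then show ?case
    using \<open>0 < c\<close> by simp
qed

lemma eq_0_if_pos_combination_le_0:
  fixes p q x y :: real
  assumes "0 < p" "0 < q" "0 \<le> x" "0 \<le> y" "p * x + q * y \<le> 0"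
  shows "x = 0" "y = 0"
proof -
  have "0 \<le> p * x" "0 \<le> q * y"
    using assms(1-4) by simp_all
  then have "p * x = 0" "q * y = 0"
    using assms(5) by linarith+
  then show "x = 0" "y = 0"
    using assms(1,2) by simp_all
qed

subsection \<open>Equilibria with means m + \<alpha> and b\<close>

locale allpay_equilibrium =
  fixes v1 v2 :: real and m :: nat and \<alpha> b :: real and X Y :: "nat pmf"
  assumes v1_pos: "0 < v1" and v2_pos: "0 < v2"
    and m_pos: "1 \<le> m" and \<alpha>_pos: "0 < \<alpha>" and \<alpha>_less_1: "\<alpha> < 1"
    and b_pos: "0 < b" and b_le_m: "b \<le> real m"
    and mean_X: "mean X = real m + \<alpha>" and mean_Y: "mean Y = b"
    and NE: "allpay_NE v1 v2 X Y"
begin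

lemma strategy_X: "strategy X" and strategy_Y: "strategy Y"
  using NE unfolding allpay_NE_def by auto

lemma bid_payoff_le: "v1 / 2 * score Y k - real k \<le> allpay_payoff v1 X Y"
  using NE strategy_return_pmf[of k] unfolding allpay_NE_def
  by (auto simp: allpay_payoff_eq_expected_score mean_return_pmf expected_score_return_pmf)

lemma expected_score_le:
  "real m * (real m + 1) * expected_score X Y \<le> 2 * real m * (real m + 1) - b * (real m + 1 - \<alpha>)"
proof -
  define l where "l = 1 - b / real m"
  have l: "0 \<le> l" "l \<le> 1"
    using m_pos b_pos b_le_m by (auto simp: l_def field_simps)
  define Z where "Z = mix l (return_pmf 0) (U_E m)"
  have "mean Z = (1 - l) * real m"
    unfolding Z_def by (rule mean_mix_U_E[OF l])
  also have "\<dots> = b"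
    using m_pos by (simp add: l_def)
  finally have "mean Z = b" .
  moreover have "allpay_payoff v2 Z X \<le> allpay_payoff v2 Y X"
    using NE strategy_mix_U_E[OF l] unfolding allpay_NE_def Z_def by auto
  ultimately have "expected_score Z X \<le> expected_score Y X"
    using v2_pos mean_Y by (simp add: allpay_payoff_eq_expected_score)
  moreover have "b / real m * (real m + 1 - \<alpha>) / (real m + 1) \<le> expected_score Z X"
    using expected_score_mix_U_E_ge[OF l strategy_X, of m] mean_X unfolding Z_def l_def
    by (simp add: algebra_simps)
  ultimately have "b * (real m + 1 - \<alpha>) / (real m * (real m + 1)) \<le> 2 - expected_score X Y"
    using expected_score_swap[of X Y] by simp
  moreover have "0 < real m * (real m + 1)"
    using m_pos by simp
  ultimately have "b * (real m + 1 - \<alpha>) \<le> (2 - expected_score X Y) * (real m * (real m + 1))"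
    by (simp add: pos_divide_le_eq)
  then show ?thesis
    by (simp add: algebra_simps)
qed

definition odd_bid_slack :: "nat \<Rightarrow> real" where
  "odd_bid_slack i = allpay_payoff v1 X Y - (v1 / 2 * score Y (2 * i + 1) - real (2 * i + 1))"

definition tail_slack :: "nat \<Rightarrow> real" where
  "tail_slack n = measure_pmf.expectation Y (\<lambda>y. real (2 * n - y)) - (2 * real n - b)"

lemma odd_bid_slack_nonneg: "0 \<le> odd_bid_slack i"
  using bid_payoff_le[of "2 * i + 1"] unfolding odd_bid_slack_def by simp

lemma tail_slack_nonneg: "0 \<le> tail_slack n"
  using expectation_diff_ge[OF strategy_Y, of "2 * n"] mean_Y unfolding tail_slack_def by simp

lemma odd_bids_identity:
  "real n * allpay_payoff v1 X Y + real n ^ 2 - v1 / 2 * (2 * real n - b)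
     = (\<Sum>i<n. odd_bid_slack i) + v1 / 2 * tail_slack n"
proof -
  have "(\<Sum>i<n. odd_bid_slack i) = real n * allpay_payoff v1 X Y
      - v1 / 2 * (\<Sum>i<n. score Y (2 * i + 1)) + (\<Sum>i<n. real (2 * i + 1))"
    unfolding odd_bid_slack_def by (simp add: sum_subtractf sum.distrib sum_distrib_left)
  also have "(\<Sum>i<n. real (2 * i + 1)) = real n ^ 2"
    by (induction n) (auto simp: algebra_simps power2_eq_square)
  also have "(\<Sum>i<n. score Y (2 * i + 1)) = measure_pmf.expectation Y (\<lambda>y. real (2 * n - y))"
    by (simp only: sum_score_odd sum_cdf_nat_eq_expectation)
  finally show ?thesis
    unfolding tail_slack_def by (simp add: algebra_simps)
qed

text \<open>Averaging the identity for n = m and n = m + 1 with weights (1 - \<alpha>)(m + 1) and \<alpha> m turns its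
  left-hand side into (v1/2) m (m + 1) times the gap in the bound expected_score_le.\<close>

lemma
  shows odd_bid_slack_eq_0: "i \<le> m \<Longrightarrow> odd_bid_slack i = 0"
    and tail_slack_eq_0: "tail_slack m = 0"
proof -
  let ?L = "\<lambda>n. real n * allpay_payoff v1 X Y + real n ^ 2 - v1 / 2 * (2 * real n - b)"
  let ?R = "\<lambda>n. (\<Sum>i<n. odd_bid_slack i) + v1 / 2 * tail_slack n"
  have "(1 - \<alpha>) * (real m + 1) * ?L m + \<alpha> * real m * ?L (m + 1) = v1 / 2 *
      (real m * (real m + 1) * expected_score X Y - (2 * real m * (real m + 1) - b * (real m + 1 - \<alpha>)))"
    by (simp add: allpay_payoff_eq_expected_score mean_X power2_eq_square field_simps)
  also have "\<dots> \<le> 0"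
    using expected_score_le v1_pos by (simp add: mult_nonneg_nonpos)
  finally have comb: "(1 - \<alpha>) * (real m + 1) * ?R m + \<alpha> * real m * ?R (m + 1) \<le> 0"
    by (simp only: odd_bids_identity)
  have R_nonneg: "0 \<le> (\<Sum>i<n. odd_bid_slack i)" "0 \<le> v1 / 2 * tail_slack n" for n
    using odd_bid_slack_nonneg tail_slack_nonneg v1_pos by (auto intro: sum_nonneg)
  then have "0 \<le> ?R n" for n
    by (rule add_nonneg_nonneg)
  moreover have "0 < (1 - \<alpha>) * (real m + 1)" "0 < \<alpha> * real m"
    using \<alpha>_pos \<alpha>_less_1 m_pos by auto
  ultimately have "?R m = 0" "?R (m + 1) = 0"
    using eq_0_if_pos_combination_le_0[OF _ _ _ _ comb] by blast+
  then have "v1 / 2 * tail_slack m = 0" and odd_sum: "(\<Sum>i<m + 1. odd_bid_slack i) = 0"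
    using R_nonneg[of m] R_nonneg[of "m + 1"] by linarith+
  then show "tail_slack m = 0"
    using v1_pos by simp
  have "\<forall>i\<in>{..<m + 1}. odd_bid_slack i = 0"
    using odd_sum by (subst (asm) sum_nonneg_eq_0_iff) (auto intro: odd_bid_slack_nonneg)
  then show "odd_bid_slack i = 0" if "i \<le> m"
    using that by auto
qed

lemma set_pmf_Y_le: "y \<in> set_pmf Y \<Longrightarrow> y \<le> 2 * m"
  using tail_slack_eq_0 mean_Y unfolding tail_slack_def
  by (intro set_pmf_le_if_expectation_diff_eq[OF strategy_Y]) simp_all

lemma cdf_Y_eq_1: "2 * m \<le> k \<Longrightarrow> cdf_nat Y k = 1"
proof -
  assume "2 * m \<le> k"
  then have "measure_pmf.prob Y {k<..} = 0"
    using set_pmf_Y_le by (force simp: measure_pmf_zero_iff)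
  then show "cdf_nat Y k = 1"
    using prob_greaterThan_eq[of Y k] by simp
qed

lemma odd_bid_indifference:
  "i \<le> m \<Longrightarrow> v1 / 2 * (cdf_nat Y (2 * i) + cdf_nat Y (2 * i + 1)) = allpay_payoff v1 X Y + real (2 * i + 1)"
  using odd_bid_slack_eq_0[of i] score_Suc[of Y "2 * i"] unfolding odd_bid_slack_def by simp

lemma cdf_Y_flat: "k \<le> m \<Longrightarrow> cdf_nat Y (2 * k + 1) = cdf_nat Y (2 * k)"
proof (rule flat_at_odd_points[where c="v1 / 2" and P="allpay_payoff v1 X Y"])
  show "cdf_nat Y k \<le> cdf_nat Y (Suc k)" for k
    using pmf_Suc_eq_cdf_nat[of Y k] pmf_nonneg[of Y "Suc k"] by simp
  show "v1 / 2 * (cdf_nat Y (2 * i + 1) + cdf_nat Y (2 * i + 2)) \<le> allpay_payoff v1 X Y + real (2 * i + 2)" for i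
    using bid_payoff_le[of "2 * i + 2"] score_Suc[of Y "2 * i + 1"] by simp
qed (use odd_bid_indifference cdf_Y_eq_1 v1_pos in simp_all)

lemma v1_cdf_Y_even: "k \<le> m \<Longrightarrow> v1 * cdf_nat Y (2 * k) = allpay_payoff v1 X Y + real (2 * k + 1)"
  using odd_bid_indifference[of k] cdf_Y_flat[of k] by simp

lemma v1_eq_payoff: "v1 = allpay_payoff v1 X Y + 2 * real m + 1"
  using v1_cdf_Y_even[of m] cdf_Y_eq_1[of "2 * m"] by simp

lemma v1_mul_b: "v1 / 2 * b = real m * (real m + 1)"
proof -
  have "real m * allpay_payoff v1 X Y + real m ^ 2 - v1 / 2 * (2 * real m - b) = 0"
    using odd_bids_identity[of m] odd_bid_slack_eq_0 tail_slack_eq_0 by simp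
  moreover have "allpay_payoff v1 X Y = v1 - 2 * real m - 1"
    using v1_eq_payoff by simp
  ultimately show ?thesis
    by (simp add: field_simps power2_eq_square)
qed

lemma pmf_Y: "pmf Y n = (if n = 0 then 1 - 2 * real m / v1 else if even n \<and> n \<le> 2 * m then 2 / v1 else 0)"
proof -
  have "n = 0 \<or> (\<exists>k. n = 2 * k + 2 \<and> k < m) \<or> (\<exists>k. n = 2 * k + 1 \<and> k \<le> m) \<or> 2 * m < n"
    by presburger
  then consider "n = 0" | k where "n = 2 * k + 2" "k < m" | k where "n = 2 * k + 1" "k \<le> m"
    | "2 * m < n"
    by blast
  then show ?thesis
  proof cases
    case 1
    then show ?thesis
      using v1_cdf_Y_even[of 0] v1_eq_payoff v1_pos by (simp add: pmf_0_eq_cdf_nat field_simps)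
  next
    case (2 k)
    then have "v1 * pmf Y n = 2"
      using v1_cdf_Y_even[of "Suc k"] v1_cdf_Y_even[of k] cdf_Y_flat[of k]
      by (simp add: pmf_Suc_eq_cdf_nat right_diff_distrib)
    then show ?thesis
      using 2 v1_pos by (simp add: field_simps)
  next
    case (3 k)
    then show ?thesis
      using cdf_Y_flat[of k] by (simp add: pmf_Suc_eq_cdf_nat)
  next
    case 4
    then show ?thesis
      using set_pmf_Y_le[of n] by (auto simp: set_pmf_iff)
  qed
qed

lemma Y_eq_mix_U_E: "Y = mix (1 - b / real m) (return_pmf 0) (U_E m)"
proof (rule pmf_eqI)
  fix n
  have l: "0 \<le> 1 - b / real m" "1 - b / real m \<le> 1"
    using m_pos b_pos b_le_m by (auto simp: field_simps)
  have m: "real m \<noteq> 0" "real m + 1 \<noteq> 0"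
    using m_pos by simp_all
  have "b * v1 = 2 * real m * (real m + 1)"
    using v1_mul_b by (simp add: algebra_simps)
  moreover have "real m * (real m + 1) \<noteq> 0"
    using m by simp
  ultimately have v1: "2 / v1 = b / (real m * (real m + 1))" "2 * real m / v1 = b / (real m + 1)"
    using v1_pos m by (subst frac_eq_eq; simp add: algebra_simps)+
  have E: "n \<in> (\<lambda>k. 2 * k) ` {..m} \<longleftrightarrow> even n \<and> n \<le> 2 * m"
    by (auto elim!: evenE)
  show "pmf Y n = pmf (mix (1 - b / real m) (return_pmf 0) (U_E m)) n"
    unfolding pmf_Y pmf_mix_U_E[OF l] E v1 using m by (auto simp: divide_simps; simp add: algebra_simps)
qed

end

theorem lemma4:
  fixes v1 v2 :: real and m :: nat and \<alpha> b :: real and X Y :: "nat pmf"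
  assumes "v1 \<ge> v2" and "v2 > 0"
    and "m \<ge> 1"
    and "0 < \<alpha>" and "\<alpha> < 1"
    and "0 < b" and "b \<le> real m"
    and "mean X = real m + \<alpha>" and "mean Y = b"
    and "allpay_NE v1 v2 X Y"
  shows "real m * (real m + 1) / b = v1 / 2
         \<and> lotto_NE (real m + \<alpha>) b X Y
         \<and> Y = mix (1 - b / real m) (return_pmf 0) (U_E m)"
proof -
  interpret allpay_equilibrium v1 v2 m \<alpha> b X Y
    using assms by unfold_locales auto
  have "lotto_NE (real m + \<alpha>) b X Y"
    using allpay_NE_imp_lotto_NE[OF assms(10) v1_pos v2_pos] mean_X mean_Y by simp
  then show ?thesis
    using v1_mul_b Y_eq_mix_U_E b_pos by (auto simp: field_simps)
qed

end
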